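(* Let $\eta$ and $\hat\eta$ be Borel probability measures on $\mathbb{R}$. If $W_1(\eta,\hat\eta)\le\varepsilon$, then $|\mu_\eta-\mu_{\hat\eta}|\le\varepsilon$ and $|\mathrm{MAD}_\eta-\mathrm{MAD}_{\hat\eta}|\le2\varepsilon$. If in addition $\eta$ has a Lebesgue density bounded by $c<\infty$, then $$|I_{\eta,a,b}-I_{\hat\eta,a,b}|\le2(2c\,\varepsilon)^{1/2}\qquad(-\infty\le a<b\le\infty).$$ If $W_2(\eta,\hat\eta)\le\varepsilon$, then $W_1(\eta,\hat\eta)\le\varepsilon$, $$|\sigma_\eta-\sigma_{\hat\eta}|\le\tfrac12(2^{1/2}+6^{1/2})\varepsilon\le2\varepsilon,$$ and $$|\sigma_\eta^2-\sigma_{\hat\eta}^2|\le2^{3/2}\min(\sigma_\eta,\sigma_{\hat\eta})\varepsilon+(1+3\cdot2^{1/2})\varepsilon^2\le3\min(\sigma_\eta,\sigma_{\hat\eta})\varepsilon+5.25\,\varepsilon^2.$$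
   Context: $W_p(\eta,\hat\eta)=\inf_\gamma\{\int|\theta-\hat\theta|^p\gamma(d\theta,d\hat\theta)\}^{1/p}$ over couplings $\gamma$ of $\eta,\hat\eta$. For $\Theta\sim\xi$ on $\mathbb{R}$: $\mu_\xi=\mathbb{E}\Theta$, $\sigma_\xi^2$ its variance, $\mathrm{MAD}_\xi=\mathbb{E}|\Theta-\mu_\xi|$, $I_{\xi,a,b}=\mathbb{E}\{\mathbf 1_{[a,b]}(\Theta)\}$. *)

theory Defs
  imports "HOL-Probability.Probability"
begin

definition couplings :: "real measure \<Rightarrow> real measure \<Rightarrow> (real \<times> real) measure set" where
  "couplings \<eta> \<eta>' = {\<gamma>. prob_space \<gamma> \<and> sets \<gamma> = sets (borel \<Otimes>\<^sub>M borel) \<and>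
      distr \<gamma> borel fst = \<eta> \<and> distr \<gamma> borel snd = \<eta>'}"

definition wass_cost :: "real \<Rightarrow> real measure \<Rightarrow> real measure \<Rightarrow> ennreal" where
  "wass_cost p \<eta> \<eta>' = (INF \<gamma>\<in>couplings \<eta> \<eta>'. \<integral>\<^sup>+ z. ennreal (\<bar>fst z - snd z\<bar> powr p) \<partial>\<gamma>)"

definition Wass :: "real \<Rightarrow> real measure \<Rightarrow> real measure \<Rightarrow> ennreal" where
  "Wass p \<eta> \<eta>' = (if wass_cost p \<eta> \<eta>' = \<infinity> then \<infinity>
                    else ennreal ((enn2real (wass_cost p \<eta> \<eta>')) powr (1 / p)))"

definition mean_of :: "real measure \<Rightarrow> real" where
  "mean_of \<xi> = (\<integral>x. x \<partial>\<xi>)"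

definition var_of :: "real measure \<Rightarrow> real" where
  "var_of \<xi> = (\<integral>x. (x - mean_of \<xi>)\<^sup>2 \<partial>\<xi>)"

definition sd_of :: "real measure \<Rightarrow> real" where
  "sd_of \<xi> = sqrt (var_of \<xi>)"

definition MAD_of :: "real measure \<Rightarrow> real" where
  "MAD_of \<xi> = (\<integral>x. \<bar>x - mean_of \<xi>\<bar> \<partial>\<xi>)"

definition I_of :: "real measure \<Rightarrow> ereal \<Rightarrow> ereal \<Rightarrow> real" where
  "I_of \<xi> a b = measure \<xi> {x. a \<le> ereal x \<and> ereal x \<le> b}"

end

(*
  Every estimate is first proved for a single coupling (X, Y) of the two laws and then
  passed to the infimum over couplings.  For a coupling, |E X - E Y| <= E|X - Y|, and the
  mean absolute deviation moves by at most twice that.  By Cauchy-Schwarz the L2 norm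
  satisfies the reverse triangle inequality, so the standard deviations differ by at most
  the L2 norm of (X - E X) - (Y - E Y), which is at most that of X - Y; Cauchy-Schwarz
  against the constant 1 gives E|X - Y| <= (E (X - Y)^2)^(1/2), hence W1 <= W2.
  For the interval probabilities: if X lies in [a, b] but Y does not, then either
  |X - Y| >= t or X lies within t of an endpoint.  The density bound c makes these
  strips cost at most 2ct, Markov's inequality bounds P(|X - Y| >= t) by E|X - Y| / t,
  and optimising over t gives 2 (2 c E|X - Y|)^(1/2).
*)
theory Submission
  imports Defs
begin

section \<open>Cauchy--Schwarz and second moments\<close>

lemma Cauchy_Schwarz_integral:
  fixes f g :: "'a \<Rightarrow> real"
  assumes [measurable]: "f \<in> borel_measurable M" "g \<in> borel_measurable M"
    and f2: "integrable M (\<lambda>x. (f x)\<^sup>2)" and g2: "integrable M (\<lambda>x. (g x)\<^sup>2)"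
  shows "integrable M (\<lambda>x. f x * g x)"
    and "(\<integral>x. \<bar>f x * g x\<bar> \<partial>M) \<le> sqrt (\<integral>x. (f x)\<^sup>2 \<partial>M) * sqrt (\<integral>x. (g x)\<^sup>2 \<partial>M)"
proof -
  show fg: "integrable M (\<lambda>x. f x * g x)"
  proof (rule Bochner_Integration.integrable_bound[OF Bochner_Integration.integrable_add[OF f2 g2]])
    show "AE x in M. norm (f x * g x) \<le> norm ((f x)\<^sup>2 + (g x)\<^sup>2)"
    proof (intro AE_I2)
      fix x
      have "\<bar>f x\<bar> * \<bar>g x\<bar> \<le> \<bar>f x\<bar>\<^sup>2 + \<bar>g x\<bar>\<^sup>2"
        using sum_squares_bound[of "\<bar>f x\<bar>" "\<bar>g x\<bar>"] mult_nonneg_nonneg[of "\<bar>f x\<bar>" "\<bar>g x\<bar>"] by linarith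
      then show "norm (f x * g x) \<le> norm ((f x)\<^sup>2 + (g x)\<^sup>2)" by (simp add: abs_mult)
    qed
  qed measurable
  have "ennreal ((\<integral>x. \<bar>f x * g x\<bar> \<partial>M)\<^sup>2) = (\<integral>\<^sup>+x. ennreal \<bar>f x\<bar> * ennreal \<bar>g x\<bar> \<partial>M)\<^sup>2"
    using nn_integral_eq_integral[OF integrable_abs[OF fg]]
    by (simp add: abs_mult ennreal_mult ennreal_power)
  also have "\<dots> \<le> (\<integral>\<^sup>+x. ennreal \<bar>f x\<bar> ^ 2 \<partial>M) * (\<integral>\<^sup>+x. ennreal \<bar>g x\<bar> ^ 2 \<partial>M)"
    by (rule Cauchy_Schwarz_nn_integral) measurable
  also have "\<dots> = ennreal ((\<integral>x. (f x)\<^sup>2 \<partial>M) * (\<integral>x. (g x)\<^sup>2 \<partial>M))"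
    using nn_integral_eq_integral[OF f2] nn_integral_eq_integral[OF g2]
    by (simp add: ennreal_power ennreal_mult)
  finally have "(\<integral>x. \<bar>f x * g x\<bar> \<partial>M)\<^sup>2 \<le> (\<integral>x. (f x)\<^sup>2 \<partial>M) * (\<integral>x. (g x)\<^sup>2 \<partial>M)"
    by (simp add: ennreal_le_iff)
  then show "(\<integral>x. \<bar>f x * g x\<bar> \<partial>M) \<le> sqrt (\<integral>x. (f x)\<^sup>2 \<partial>M) * sqrt (\<integral>x. (g x)\<^sup>2 \<partial>M)"
    by (simp add: real_le_rsqrt flip: real_sqrt_mult)
qed

lemma L2_reverse_triangle:
  fixes f g :: "'a \<Rightarrow> real"
  assumes [measurable]: "f \<in> borel_measurable M" "g \<in> borel_measurable M"
    and f2: "integrable M (\<lambda>x. (f x)\<^sup>2)" and g2: "integrable M (\<lambda>x. (g x)\<^sup>2)"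
  shows "\<bar>sqrt (\<integral>x. (f x)\<^sup>2 \<partial>M) - sqrt (\<integral>x. (g x)\<^sup>2 \<partial>M)\<bar> \<le> sqrt (\<integral>x. (f x - g x)\<^sup>2 \<partial>M)"
proof -
  let ?A = "\<integral>x. (f x)\<^sup>2 \<partial>M" and ?B = "\<integral>x. (g x)\<^sup>2 \<partial>M"
  note fg = Cauchy_Schwarz_integral[OF assms]
  have "(\<integral>x. (f x - g x)\<^sup>2 \<partial>M) = ?A + ?B - 2 * (\<integral>x. f x * g x \<partial>M)"
  proof -
    have "(\<lambda>x. (f x - g x)\<^sup>2) = (\<lambda>x. (f x)\<^sup>2 + (g x)\<^sup>2 - 2 * (f x * g x))"
      by (simp add: fun_eq_iff power2_diff)
    then show ?thesis using f2 g2 fg(1) by simp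
  qed
  also have "(\<integral>x. f x * g x \<partial>M) \<le> sqrt ?A * sqrt ?B"
    using integral_abs_bound[of M "\<lambda>x. f x * g x"] fg(2) by linarith
  then have "?A + ?B - 2 * sqrt ?A * sqrt ?B \<le> ?A + ?B - 2 * (\<integral>x. f x * g x \<partial>M)"
    by linarith
  also have "?A + ?B - 2 * sqrt ?A * sqrt ?B = (sqrt ?A - sqrt ?B)\<^sup>2"
    by (simp add: power2_diff)
  finally show ?thesis
    by (metis real_sqrt_abs real_sqrt_le_mono)
qed

lemma (in prob_space) expectation_abs_le_sqrt_expectation_square:
  fixes X :: "'a \<Rightarrow> real"
  assumes [measurable]: "random_variable borel X" and X2: "integrable M (\<lambda>x. (X x)\<^sup>2)"
  shows "integrable M (\<lambda>x. \<bar>X x\<bar>)" "expectation (\<lambda>x. \<bar>X x\<bar>) \<le> sqrt (expectation (\<lambda>x. (X x)\<^sup>2))"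
proof -
  show "integrable M (\<lambda>x. \<bar>X x\<bar>)"
    using square_integrable_imp_integrable[OF _ X2] by simp
  show "expectation (\<lambda>x. \<bar>X x\<bar>) \<le> sqrt (expectation (\<lambda>x. (X x)\<^sup>2))"
    using Cauchy_Schwarz_integral(2)[of X M "\<lambda>_. 1"] X2 by (simp add: prob_space)
qed

lemma (in prob_space) variance_le_expectation_square:
  fixes X :: "'a \<Rightarrow> real"
  assumes "random_variable borel X" "integrable M (\<lambda>x. (X x)\<^sup>2)"
  shows "variance X \<le> expectation (\<lambda>x. (X x)\<^sup>2)"
  using variance_eq[OF square_integrable_imp_integrable[OF assms] assms(2)] by simp

lemma (in prob_space) integrable_square_shift:
  fixes X :: "'a \<Rightarrow> real"
  assumes "random_variable borel X" "integrable M (\<lambda>x. (X x)\<^sup>2)"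
  shows "integrable M (\<lambda>x. (X x - c)\<^sup>2)"
proof -
  have "integrable M X" by (rule square_integrable_imp_integrable[OF assms])
  then have "integrable M (\<lambda>x. (X x)\<^sup>2 - 2 * c * X x + c\<^sup>2)" using assms(2) by simp
  also have "(\<lambda>x. (X x)\<^sup>2 - 2 * c * X x + c\<^sup>2) = (\<lambda>x. (X x - c)\<^sup>2)"
    by (simp add: fun_eq_iff power2_diff)
  finally show ?thesis .
qed

section \<open>Two real random variables on a common probability space\<close>

lemma (in prob_space) abs_expectation_diff_le:
  fixes X Y :: "'a \<Rightarrow> real"
  assumes "integrable M X" "integrable M Y"
  shows "\<bar>expectation X - expectation Y\<bar> \<le> expectation (\<lambda>x. \<bar>X x - Y x\<bar>)"
  using integral_abs_bound[of M "\<lambda>x. X x - Y x"] assms by simp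

lemma (in prob_space) abs_mean_abs_deviation_diff_le:
  fixes X Y :: "'a \<Rightarrow> real"
  assumes X: "integrable M X" and Y: "integrable M Y"
  shows "\<bar>expectation (\<lambda>x. \<bar>X x - expectation X\<bar>) - expectation (\<lambda>x. \<bar>Y x - expectation Y\<bar>)\<bar>
    \<le> 2 * expectation (\<lambda>x. \<bar>X x - Y x\<bar>)"
proof -
  let ?d = "expectation X - expectation Y"
  have XY: "integrable M (\<lambda>x. \<bar>X x - Y x\<bar>)" using X Y by simp
  have "\<bar>expectation (\<lambda>x. \<bar>X x - expectation X\<bar>) - expectation (\<lambda>x. \<bar>Y x - expectation Y\<bar>)\<bar>
      = \<bar>expectation (\<lambda>x. \<bar>X x - expectation X\<bar> - \<bar>Y x - expectation Y\<bar>)\<bar>"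
    using X Y by simp
  also have "\<dots> \<le> expectation (\<lambda>x. \<bar>\<bar>X x - expectation X\<bar> - \<bar>Y x - expectation Y\<bar>\<bar>)"
    by (rule integral_abs_bound)
  also have "\<dots> \<le> expectation (\<lambda>x. \<bar>X x - Y x\<bar> + \<bar>?d\<bar>)"
    using X Y XY by (intro integral_mono) auto
  also have "\<dots> = expectation (\<lambda>x. \<bar>X x - Y x\<bar>) + \<bar>?d\<bar>"
    using XY by (simp add: prob_space)
  also have "\<bar>?d\<bar> \<le> expectation (\<lambda>x. \<bar>X x - Y x\<bar>)"
    by (rule abs_expectation_diff_le[OF X Y])
  finally show ?thesis by simp
qed

lemma (in prob_space) abs_sqrt_variance_diff_le:
  fixes X Y :: "'a \<Rightarrow> real"
  assumes [measurable]: "random_variable borel X" "random_variable borel Y"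
    and X2: "integrable M (\<lambda>x. (X x)\<^sup>2)" and Y2: "integrable M (\<lambda>x. (Y x)\<^sup>2)"
  shows "\<bar>sqrt (variance X) - sqrt (variance Y)\<bar> \<le> sqrt (expectation (\<lambda>x. (X x - Y x)\<^sup>2))"
proof -
  let ?Z = "\<lambda>x. X x - Y x"
  have X: "integrable M X" and Y: "integrable M Y"
    using X2 Y2 by (simp_all add: square_integrable_imp_integrable)
  have Z2: "integrable M (\<lambda>x. (?Z x)\<^sup>2)"
  proof -
    have "integrable M (\<lambda>x. (X x)\<^sup>2 + (Y x)\<^sup>2 - 2 * (X x * Y x))"
      using X2 Y2 Cauchy_Schwarz_integral(1)[of X M Y] by simp
    also have "(\<lambda>x. (X x)\<^sup>2 + (Y x)\<^sup>2 - 2 * (X x * Y x)) = (\<lambda>x. (?Z x)\<^sup>2)"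
      by (simp add: fun_eq_iff power2_diff)
    finally show ?thesis .
  qed
  have "\<bar>sqrt (variance X) - sqrt (variance Y)\<bar>
      \<le> sqrt (expectation (\<lambda>x. ((X x - expectation X) - (Y x - expectation Y))\<^sup>2))"
    using X2 Y2 by (intro L2_reverse_triangle integrable_square_shift) auto
  also have "(\<lambda>x. ((X x - expectation X) - (Y x - expectation Y))\<^sup>2) = (\<lambda>x. (?Z x - expectation ?Z)\<^sup>2)"
    using X Y by (simp add: algebra_simps)
  also have "variance ?Z \<le> expectation (\<lambda>x. (?Z x)\<^sup>2)"
    using Z2 by (intro variance_le_expectation_square) auto
  finally show ?thesis by simp
qed

lemma (in prob_space) prob_le_prob_plus_strip:
  fixes X Y :: "'a \<Rightarrow> real"
  assumes [measurable]: "random_variable borel X" "random_variable borel Y"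
    "S \<in> sets borel" "J \<in> sets borel"
    and strip: "\<And>x y. x \<in> S \<Longrightarrow> y \<notin> S \<Longrightarrow> \<bar>x - y\<bar> < t \<Longrightarrow> x \<in> J"
  shows "prob {\<omega>\<in>space M. X \<omega> \<in> S}
    \<le> prob {\<omega>\<in>space M. Y \<omega> \<in> S} + prob {\<omega>\<in>space M. X \<omega> \<in> J}
      + prob {\<omega>\<in>space M. t \<le> \<bar>X \<omega> - Y \<omega>\<bar>}"
proof -
  let ?Y = "{\<omega>\<in>space M. Y \<omega> \<in> S}" and ?J = "{\<omega>\<in>space M. X \<omega> \<in> J}"
    and ?T = "{\<omega>\<in>space M. t \<le> \<bar>X \<omega> - Y \<omega>\<bar>}"
  have "{\<omega>\<in>space M. X \<omega> \<in> S} \<subseteq> ?Y \<union> ?J \<union> ?T"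
  proof
    fix \<omega> assume "\<omega> \<in> {\<omega>\<in>space M. X \<omega> \<in> S}"
    then show "\<omega> \<in> ?Y \<union> ?J \<union> ?T" using strip[of "X \<omega>" "Y \<omega>"] by (auto simp: not_le)
  qed
  then have "prob {\<omega>\<in>space M. X \<omega> \<in> S} \<le> prob (?Y \<union> ?J \<union> ?T)"
    by (intro finite_measure_mono) auto
  also have "\<dots> \<le> prob (?Y \<union> ?J) + prob ?T"
    by (intro measure_subadditive) (auto simp: emeasure_finite)
  also have "prob (?Y \<union> ?J) \<le> prob ?Y + prob ?J"
    by (intro measure_subadditive) (auto simp: emeasure_finite)
  finally show ?thesis by simp
qed

lemma (in prob_space) prob_Un_le_dominated:
  fixes X :: "'a \<Rightarrow> real"
  assumes [measurable]: "random_variable borel X" "I \<in> sets borel" "I' \<in> sets borel"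
    and dominated: "\<And>A. A \<in> sets borel \<Longrightarrow> emeasure lborel A < \<infinity> \<Longrightarrow>
      prob {\<omega>\<in>space M. X \<omega> \<in> A} \<le> c * measure lborel A"
    and "emeasure lborel I = ennreal t" "emeasure lborel I' = ennreal t" "0 \<le> t"
  shows "prob {\<omega>\<in>space M. X \<omega> \<in> I \<union> I'} \<le> 2 * c * t"
proof -
  have "prob {\<omega>\<in>space M. X \<omega> \<in> I \<union> I'}
      = prob ({\<omega>\<in>space M. X \<omega> \<in> I} \<union> {\<omega>\<in>space M. X \<omega> \<in> I'})"
    by (auto intro: arg_cong[where f = prob])
  also have "\<dots> \<le> prob {\<omega>\<in>space M. X \<omega> \<in> I} + prob {\<omega>\<in>space M. X \<omega> \<in> I'}"
    by (intro measure_subadditive) (auto simp: emeasure_finite)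
  also have "\<dots> \<le> c * t + c * t"
    using assms(5-7) by (intro add_mono order_trans[OF dominated]) (auto simp: measure_def)
  finally show ?thesis by simp
qed

text \<open>For an infinite endpoint \<^term>\<open>real_of_ereal\<close> returns the junk value 0; the strip
  at that end is then harmless, since no point can leave or enter the interval through it.\<close>

lemma ereal_Icc_exit_strip:
  fixes a b :: ereal
  assumes "a \<le> ereal x" "ereal x \<le> b" "\<not> (a \<le> ereal y \<and> ereal y \<le> b)" "\<bar>x - y\<bar> < t"
  shows "x \<in> {real_of_ereal a ..< real_of_ereal a + t} \<union> {real_of_ereal b - t <.. real_of_ereal b}"
  using assms by (cases a; cases b) auto

lemma ereal_Icc_enter_strip:
  fixes a b :: ereal
  assumes "\<not> (a \<le> ereal x \<and> ereal x \<le> b)" "a \<le> ereal y" "ereal y \<le> b" "\<bar>x - y\<bar> < t"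
  shows "x \<in> {real_of_ereal a - t <..< real_of_ereal a} \<union> {real_of_ereal b <..< real_of_ereal b + t}"
  using assms by (cases a; cases b) auto

lemma (in prob_space) abs_prob_ereal_Icc_diff_le:
  fixes X Y :: "'a \<Rightarrow> real" and a b :: ereal
  assumes [measurable]: "random_variable borel X" "random_variable borel Y"
    and dominated: "\<And>A. A \<in> sets borel \<Longrightarrow> emeasure lborel A < \<infinity> \<Longrightarrow>
      prob {\<omega>\<in>space M. X \<omega> \<in> A} \<le> c * measure lborel A"
    and XY: "integrable M (\<lambda>\<omega>. \<bar>X \<omega> - Y \<omega>\<bar>)" and "0 < t"
  shows "\<bar>prob {\<omega>\<in>space M. a \<le> ereal (X \<omega>) \<and> ereal (X \<omega>) \<le> b}
        - prob {\<omega>\<in>space M. a \<le> ereal (Y \<omega>) \<and> ereal (Y \<omega>) \<le> b}\<bar>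
    \<le> 2 * c * t + expectation (\<lambda>\<omega>. \<bar>X \<omega> - Y \<omega>\<bar>) / t"
proof -
  define S where "S = {x. a \<le> ereal x \<and> ereal x \<le> b}"
  define l u where "l = real_of_ereal a" and "u = real_of_ereal b"
  let ?P = "\<lambda>Z A. prob {\<omega>\<in>space M. Z \<omega> \<in> A}"
  let ?T = "prob {\<omega>\<in>space M. t \<le> \<bar>X \<omega> - Y \<omega>\<bar>}"
  have [measurable]: "S \<in> sets borel" unfolding S_def by measurable
  have "?P X S \<le> ?P Y S + ?P X ({l ..< l + t} \<union> {u - t <.. u}) + ?T"
  proof (rule prob_le_prob_plus_strip)
    show "x \<in> {l ..< l + t} \<union> {u - t <.. u}" if "x \<in> S" "y \<notin> S" "\<bar>x - y\<bar> < t" for x y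
      unfolding l_def u_def by (rule ereal_Icc_exit_strip) (use that in \<open>auto simp: S_def\<close>)
  qed auto
  \<comment> \<open>applied to the complement of S, the same inclusion bounds the reverse difference\<close>
  moreover have "?P X (- S) \<le> ?P Y (- S) + ?P X ({l - t <..< l} \<union> {u <..< u + t}) + ?T"
  proof (rule prob_le_prob_plus_strip)
    show "x \<in> {l - t <..< l} \<union> {u <..< u + t}" if "x \<in> - S" "y \<notin> - S" "\<bar>x - y\<bar> < t" for x y
      unfolding l_def u_def by (rule ereal_Icc_enter_strip) (use that in \<open>auto simp: S_def\<close>)
  qed auto
  moreover have "?P Z (- S) = 1 - ?P Z S" if [measurable]: "random_variable borel Z" for Z
  proof -
    have "{\<omega>\<in>space M. Z \<omega> \<in> - S} = space M - {\<omega>\<in>space M. Z \<omega> \<in> S}" by auto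
    then show ?thesis by (simp add: prob_compl)
  qed
  moreover have "?P X ({l ..< l + t} \<union> {u - t <.. u}) \<le> 2 * c * t"
    "?P X ({l - t <..< l} \<union> {u <..< u + t}) \<le> 2 * c * t"
    by (rule prob_Un_le_dominated[OF _ _ _ dominated]; use \<open>0 < t\<close> in simp)+
  moreover have "?T \<le> expectation (\<lambda>\<omega>. \<bar>X \<omega> - Y \<omega>\<bar>) / t"
    using XY \<open>0 < t\<close> by (intro integral_Markov_inequality_measure[where A = "space M"]) auto
  ultimately show ?thesis
    unfolding S_def by (auto simp: abs_le_iff)
qed

section \<open>Couplings of two distributions on the real line\<close>

locale coupling =
  fixes \<gamma> :: "(real \<times> real) measure" and \<eta> \<eta>' :: "real measure"
  assumes in_couplings: "\<gamma> \<in> couplings \<eta> \<eta>'"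
begin

sublocale prob_space \<gamma>
  using in_couplings by (simp add: couplings_def)

lemma sets_eq [measurable_cong]: "sets \<gamma> = sets (borel \<Otimes>\<^sub>M borel)"
  using in_couplings by (simp add: couplings_def)

lemma distr_fst: "distr \<gamma> borel fst = \<eta>" and distr_snd: "distr \<gamma> borel snd = \<eta>'"
  using in_couplings by (simp_all add: couplings_def)

lemma integral_comp_fst: "g \<in> borel_measurable borel \<Longrightarrow> expectation (\<lambda>z. g (fst z)) = integral\<^sup>L \<eta> g"
  and integral_comp_snd: "g \<in> borel_measurable borel \<Longrightarrow> expectation (\<lambda>z. g (snd z)) = integral\<^sup>L \<eta>' g"
  for g :: "real \<Rightarrow> real"
  by (simp_all add: integral_distr flip: distr_fst distr_snd)

lemma integrable_comp_fst: "g \<in> borel_measurable borel \<Longrightarrow> integrable \<eta> g \<Longrightarrow> integrable \<gamma> (\<lambda>z. g (fst z))"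
  and integrable_comp_snd: "g \<in> borel_measurable borel \<Longrightarrow> integrable \<eta>' g \<Longrightarrow> integrable \<gamma> (\<lambda>z. g (snd z))"
  for g :: "real \<Rightarrow> real"
  by (simp_all add: integrable_distr_eq flip: distr_fst distr_snd)

lemma prob_fst_mem: "A \<in> sets borel \<Longrightarrow> prob {z\<in>space \<gamma>. fst z \<in> A} = measure \<eta> A"
  and prob_snd_mem: "A \<in> sets borel \<Longrightarrow> prob {z\<in>space \<gamma>. snd z \<in> A} = measure \<eta>' A"
  by (simp_all add: measure_distr vimage_def Int_def conj_commute flip: distr_fst distr_snd)

lemma mean_of_eq: "mean_of \<eta> = expectation fst" "mean_of \<eta>' = expectation snd"
  using integral_comp_fst[of "\<lambda>x. x"] integral_comp_snd[of "\<lambda>x. x"] by (simp_all add: mean_of_def)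

lemma abs_mean_diff_le:
  assumes "integrable \<eta> (\<lambda>x. x)" "integrable \<eta>' (\<lambda>x. x)"
  shows "\<bar>mean_of \<eta> - mean_of \<eta>'\<bar> \<le> expectation (\<lambda>z. \<bar>fst z - snd z\<bar>)"
proof -
  have "integrable \<gamma> fst" "integrable \<gamma> snd"
    using integrable_comp_fst[OF _ assms(1)] integrable_comp_snd[OF _ assms(2)] by simp_all
  then show ?thesis unfolding mean_of_eq by (rule abs_expectation_diff_le)
qed

lemma abs_MAD_diff_le:
  assumes "integrable \<eta> (\<lambda>x. x)" "integrable \<eta>' (\<lambda>x. x)"
  shows "\<bar>MAD_of \<eta> - MAD_of \<eta>'\<bar> \<le> 2 * expectation (\<lambda>z. \<bar>fst z - snd z\<bar>)"
proof -
  have "integrable \<gamma> fst" "integrable \<gamma> snd"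
    using integrable_comp_fst[OF _ assms(1)] integrable_comp_snd[OF _ assms(2)] by simp_all
  moreover have "MAD_of \<eta> = expectation (\<lambda>z. \<bar>fst z - expectation fst\<bar>)"
    "MAD_of \<eta>' = expectation (\<lambda>z. \<bar>snd z - expectation snd\<bar>)"
    unfolding MAD_of_def mean_of_eq
    using integral_comp_fst[of "\<lambda>x. \<bar>x - expectation fst\<bar>"] integral_comp_snd[of "\<lambda>x. \<bar>x - expectation snd\<bar>"]
    by simp_all
  ultimately show ?thesis
    by (simp only: abs_mean_abs_deviation_diff_le)
qed

lemma abs_sd_diff_le:
  assumes "integrable \<eta> (\<lambda>x. x\<^sup>2)" "integrable \<eta>' (\<lambda>x. x\<^sup>2)"
  shows "\<bar>sd_of \<eta> - sd_of \<eta>'\<bar> \<le> sqrt (expectation (\<lambda>z. (fst z - snd z)\<^sup>2))"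
proof -
  have "var_of \<eta> = variance fst" "var_of \<eta>' = variance snd"
    unfolding var_of_def mean_of_eq
    using integral_comp_fst[of "\<lambda>x. (x - expectation fst)\<^sup>2"] integral_comp_snd[of "\<lambda>x. (x - expectation snd)\<^sup>2"]
    by simp_all
  moreover have "integrable \<gamma> (\<lambda>z. (fst z)\<^sup>2)" "integrable \<gamma> (\<lambda>z. (snd z)\<^sup>2)"
    using integrable_comp_fst[OF _ assms(1)] integrable_comp_snd[OF _ assms(2)] by simp_all
  ultimately show ?thesis
    unfolding sd_of_def by (simp only:) (rule abs_sqrt_variance_diff_le; simp)
qed

lemma abs_I_of_diff_le:
  assumes dominated: "\<And>A. A \<in> sets borel \<Longrightarrow> emeasure lborel A < \<infinity> \<Longrightarrow> measure \<eta> A \<le> c * measure lborel A"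
    and "integrable \<gamma> (\<lambda>z. \<bar>fst z - snd z\<bar>)" "0 < t"
  shows "\<bar>I_of \<eta> a b - I_of \<eta>' a b\<bar> \<le> 2 * c * t + expectation (\<lambda>z. \<bar>fst z - snd z\<bar>) / t"
proof -
  let ?S = "{x. a \<le> ereal x \<and> ereal x \<le> b}"
  have "?S \<in> sets borel" by measurable
  then have "I_of \<eta> a b = prob {z\<in>space \<gamma>. a \<le> ereal (fst z) \<and> ereal (fst z) \<le> b}"
    "I_of \<eta>' a b = prob {z\<in>space \<gamma>. a \<le> ereal (snd z) \<and> ereal (snd z) \<le> b}"
    using prob_fst_mem[of ?S] prob_snd_mem[of ?S] by (simp_all add: I_of_def)
  moreover have "prob {z\<in>space \<gamma>. fst z \<in> A} \<le> c * measure lborel A"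
    if "A \<in> sets borel" "emeasure lborel A < \<infinity>" for A
    using dominated[OF that] prob_fst_mem[OF that(1)] by simp
  ultimately show ?thesis
    using abs_prob_ereal_Icc_diff_le[of fst snd c t a b] assms(2,3) by simp
qed

end

section \<open>Wasserstein distances\<close>

lemma integral_less_of_nn_integral_less:
  fixes f :: "'a \<Rightarrow> real"
  assumes "f \<in> borel_measurable M" "\<And>x. 0 \<le> f x" "(\<integral>\<^sup>+x. ennreal (f x) \<partial>M) < ennreal R"
  shows "integrable M f" "integral\<^sup>L M f < R"
proof -
  show f: "integrable M f"
    using assms by (intro integrableI_nonneg) (auto simp: top.not_eq_extremum order_less_trans)
  have "ennreal (integral\<^sup>L M f) < ennreal R"
    using nn_integral_eq_integral[OF f] assms by simp
  moreover have "0 \<le> integral\<^sup>L M f" using assms(2) by simp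
  ultimately show "integral\<^sup>L M f < R"
    by (simp add: ennreal_less_iff)
qed

lemma Wass_le_imp_coupling:
  assumes W: "Wass p \<eta> \<eta>' \<le> ennreal \<epsilon>" and "0 < p" "0 \<le> \<epsilon>" "\<epsilon> < r"
  obtains \<gamma> where "\<gamma> \<in> couplings \<eta> \<eta>'" "integrable \<gamma> (\<lambda>z. \<bar>fst z - snd z\<bar> powr p)"
    "(\<integral>z. \<bar>fst z - snd z\<bar> powr p \<partial>\<gamma>) < r powr p"
proof -
  let ?w = "wass_cost p \<eta> \<eta>'"
  have fin: "?w \<noteq> \<infinity>"
    using W unfolding Wass_def by (auto simp: top_unique split: if_splits)
  then have "enn2real ?w powr (1 / p) \<le> \<epsilon>"
    using W \<open>0 \<le> \<epsilon>\<close> unfolding Wass_def by simp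
  then have "(enn2real ?w powr (1 / p)) powr p \<le> \<epsilon> powr p"
    using \<open>0 < p\<close> by (intro powr_mono2) auto
  then have "enn2real ?w \<le> \<epsilon> powr p"
    using \<open>0 < p\<close> by (simp add: powr_powr)
  also have "\<dots> < r powr p"
    using assms by (intro powr_less_mono2) auto
  finally have "enn2real ?w < r powr p" .
  have "?w = ennreal (enn2real ?w)"
    using fin by (simp add: ennreal_enn2real_if)
  also have "\<dots> < ennreal (r powr p)"
    using \<open>enn2real ?w < r powr p\<close> assms by (intro ennreal_lessI) auto
  finally have "?w < ennreal (r powr p)" .
  then obtain \<gamma> where \<gamma>: "\<gamma> \<in> couplings \<eta> \<eta>'"
    and cost: "(\<integral>\<^sup>+z. ennreal (\<bar>fst z - snd z\<bar> powr p) \<partial>\<gamma>) < ennreal (r powr p)"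
    unfolding wass_cost_def INF_less_iff by blast
  interpret coupling \<gamma> \<eta> \<eta>' by (rule coupling.intro) (fact \<gamma>)
  have "(\<lambda>z. \<bar>fst z - snd z\<bar> powr p) \<in> borel_measurable \<gamma>" by measurable
  from integral_less_of_nn_integral_less[OF this _ cost] \<gamma> show ?thesis
    by (intro that) auto
qed

text \<open>The infimum defining \<open>W\<^sub>p\<close> need not be attained: a bound valid for every coupling
  yields \<open>Q \<le> g r\<close> for all \<open>r > \<epsilon>\<close>, and continuity of \<open>g\<close> at \<open>\<epsilon>\<close> passes to the limit.\<close>

lemma le_of_Wass_le:
  fixes g :: "real \<Rightarrow> real"
  assumes W: "Wass p \<eta> \<eta>' \<le> ennreal \<epsilon>" and "0 < p" "0 \<le> \<epsilon>" and g: "mono g" "isCont g \<epsilon>"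
    and bound: "\<And>\<gamma>. \<gamma> \<in> couplings \<eta> \<eta>' \<Longrightarrow> integrable \<gamma> (\<lambda>z. \<bar>fst z - snd z\<bar> powr p) \<Longrightarrow>
      Q \<le> g ((\<integral>z. \<bar>fst z - snd z\<bar> powr p \<partial>\<gamma>) powr (1 / p))"
  shows "Q \<le> g \<epsilon>"
proof -
  have above: "Q \<le> g r" if r: "\<epsilon> < r" for r
  proof -
    obtain \<gamma> where \<gamma>: "\<gamma> \<in> couplings \<eta> \<eta>'" "integrable \<gamma> (\<lambda>z. \<bar>fst z - snd z\<bar> powr p)"
      and cost: "(\<integral>z. \<bar>fst z - snd z\<bar> powr p \<partial>\<gamma>) < r powr p"
      by (rule Wass_le_imp_coupling[OF W \<open>0 < p\<close> \<open>0 \<le> \<epsilon>\<close> r])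
    have "(\<integral>z. \<bar>fst z - snd z\<bar> powr p \<partial>\<gamma>) powr (1 / p) < (r powr p) powr (1 / p)"
      using cost \<open>0 < p\<close> by (intro powr_less_mono2) auto
    also have "\<dots> = r"
      using r \<open>0 \<le> \<epsilon>\<close> \<open>0 < p\<close> by (simp add: powr_powr)
    finally show ?thesis
      using bound[OF \<gamma>] g(1) by (meson monoD less_imp_le order_trans)
  qed
  have "eventually (\<lambda>r. Q \<le> g r) (at_right \<epsilon>)"
    using eventually_at_right_less by (rule eventually_mono) (rule above)
  moreover have "(g \<longlongrightarrow> g \<epsilon>) (at_right \<epsilon>)"
    using g(2) by (simp add: isCont_def filterlim_at_split)
  ultimately show ?thesis
    by (intro tendsto_lowerbound[where F = "at_right \<epsilon>"]) auto
qed

lemma le_of_Wass_1_le: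
  fixes g :: "real \<Rightarrow> real"
  assumes "Wass 1 \<eta> \<eta>' \<le> ennreal \<epsilon>" "0 \<le> \<epsilon>" "mono g" "isCont g \<epsilon>"
    and bound: "\<And>\<gamma>. coupling \<gamma> \<eta> \<eta>' \<Longrightarrow> integrable \<gamma> (\<lambda>z. \<bar>fst z - snd z\<bar>) \<Longrightarrow>
      Q \<le> g (\<integral>z. \<bar>fst z - snd z\<bar> \<partial>\<gamma>)"
  shows "Q \<le> g \<epsilon>"
proof (rule le_of_Wass_le[OF assms(1) zero_less_one assms(2-4)])
  fix \<gamma> assume "\<gamma> \<in> couplings \<eta> \<eta>'" "integrable \<gamma> (\<lambda>z. \<bar>fst z - snd z\<bar> powr 1)"
  then have "Q \<le> g (\<integral>z. \<bar>fst z - snd z\<bar> \<partial>\<gamma>)" by (intro bound coupling.intro) simp_all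
  then show "Q \<le> g ((\<integral>z. \<bar>fst z - snd z\<bar> powr 1 \<partial>\<gamma>) powr (1 / 1))" by simp
qed

lemma le_of_Wass_2_le:
  fixes g :: "real \<Rightarrow> real"
  assumes "Wass 2 \<eta> \<eta>' \<le> ennreal \<epsilon>" "0 \<le> \<epsilon>" "mono g" "isCont g \<epsilon>"
    and bound: "\<And>\<gamma>. coupling \<gamma> \<eta> \<eta>' \<Longrightarrow> integrable \<gamma> (\<lambda>z. (fst z - snd z)\<^sup>2) \<Longrightarrow>
      Q \<le> g (sqrt (\<integral>z. (fst z - snd z)\<^sup>2 \<partial>\<gamma>))"
  shows "Q \<le> g \<epsilon>"
proof (rule le_of_Wass_le[OF assms(1) _ assms(2-4)])
  fix \<gamma> assume "\<gamma> \<in> couplings \<eta> \<eta>'" "integrable \<gamma> (\<lambda>z. \<bar>fst z - snd z\<bar> powr 2)"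
  then have "Q \<le> g (sqrt (\<integral>z. (fst z - snd z)\<^sup>2 \<partial>\<gamma>))" by (intro bound coupling.intro) simp_all
  then show "Q \<le> g ((\<integral>z. \<bar>fst z - snd z\<bar> powr 2 \<partial>\<gamma>) powr (1 / 2))" by (simp add: powr_half_sqrt)
qed simp

lemma Wass_1_eq_wass_cost: "Wass 1 \<eta> \<eta>' = wass_cost 1 \<eta> \<eta>'"
  by (simp add: Wass_def ennreal_enn2real_if)

lemma Wass_1_le_Wass_2: "Wass 1 \<eta> \<eta>' \<le> Wass 2 \<eta> \<eta>'"
proof (cases "Wass 2 \<eta> \<eta>' = \<infinity>")
  case False
  define \<epsilon> where "\<epsilon> = enn2real (Wass 2 \<eta> \<eta>')"
  have W2: "Wass 2 \<eta> \<eta>' = ennreal \<epsilon>" "0 \<le> \<epsilon>"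
    using False by (simp_all add: \<epsilon>_def ennreal_enn2real_if)
  have "wass_cost 1 \<eta> \<eta>' \<le> ennreal \<epsilon>"
  proof (rule ennreal_le_epsilon)
    fix e :: real assume "0 < e"
    obtain \<gamma> where \<gamma>: "\<gamma> \<in> couplings \<eta> \<eta>'" "integrable \<gamma> (\<lambda>z. \<bar>fst z - snd z\<bar> powr 2)"
      and cost: "(\<integral>z. \<bar>fst z - snd z\<bar> powr 2 \<partial>\<gamma>) < (\<epsilon> + e) powr 2"
      by (rule Wass_le_imp_coupling[of 2 \<eta> \<eta>' \<epsilon> "\<epsilon> + e"]) (use W2 \<open>0 < e\<close> in auto)
    interpret coupling \<gamma> \<eta> \<eta>' by (rule coupling.intro) (fact \<gamma>(1))
    have sq: "integrable \<gamma> (\<lambda>z. (fst z - snd z)\<^sup>2)" "expectation (\<lambda>z. (fst z - snd z)\<^sup>2) < (\<epsilon> + e)\<^sup>2"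
      using \<gamma>(2) cost W2(2) \<open>0 < e\<close> by simp_all
    have L1: "integrable \<gamma> (\<lambda>z. \<bar>fst z - snd z\<bar>)"
      "expectation (\<lambda>z. \<bar>fst z - snd z\<bar>) \<le> sqrt (expectation (\<lambda>z. (fst z - snd z)\<^sup>2))"
      using expectation_abs_le_sqrt_expectation_square[of "\<lambda>z. fst z - snd z"] sq(1) by simp_all
    have "wass_cost 1 \<eta> \<eta>' \<le> (\<integral>\<^sup>+z. ennreal (\<bar>fst z - snd z\<bar> powr 1) \<partial>\<gamma>)"
      unfolding wass_cost_def using \<gamma>(1) by (rule INF_lower)
    also have "\<dots> = ennreal (expectation (\<lambda>z. \<bar>fst z - snd z\<bar>))"
      using nn_integral_eq_integral[OF L1(1)] by simp
    also have "expectation (\<lambda>z. \<bar>fst z - snd z\<bar>) \<le> \<epsilon> + e"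
      using L1(2) real_sqrt_less_mono[OF sq(2)] W2(2) \<open>0 < e\<close> by simp
    then have "ennreal (expectation (\<lambda>z. \<bar>fst z - snd z\<bar>)) \<le> ennreal \<epsilon> + ennreal e"
      using W2(2) \<open>0 < e\<close> by (simp flip: ennreal_plus)
    finally show "wass_cost 1 \<eta> \<eta>' \<le> ennreal \<epsilon> + ennreal e" .
  qed
  then show ?thesis using W2 by (simp add: Wass_1_eq_wass_cost)
qed simp

lemma measure_density_le:
  fixes f :: "real \<Rightarrow> real"
  assumes [measurable]: "f \<in> borel_measurable borel" "A \<in> sets borel"
    and "\<And>x. f x \<le> c" "0 \<le> c" "emeasure lborel A < \<infinity>"
  shows "measure (density lborel (\<lambda>x. ennreal (f x))) A \<le> c * measure lborel A"
proof -
  have "emeasure (density lborel (\<lambda>x. ennreal (f x))) A = (\<integral>\<^sup>+x. ennreal (f x) * indicator A x \<partial>lborel)"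
    by (simp add: emeasure_density)
  also have "\<dots> \<le> (\<integral>\<^sup>+x. ennreal c * indicator A x \<partial>lborel)"
    using assms(3) by (intro nn_integral_mono) (auto simp: indicator_def intro: ennreal_leI)
  also have "\<dots> = ennreal c * emeasure lborel A"
    by (simp add: nn_integral_cmult_indicator)
  also have "\<dots> = ennreal (c * measure lborel A)"
    using assms(4,5) by (simp add: ennreal_mult emeasure_eq_ennreal_measure)
  finally show ?thesis
    unfolding measure_def using assms(4) by (simp add: enn2real_leI)
qed

lemma density_bound_pos:
  fixes f :: "real \<Rightarrow> real"
  assumes "prob_space (density lborel (\<lambda>x. ennreal (f x)))" "\<And>x. f x \<le> c"
  shows "0 < c"
proof (rule ccontr)
  assume "\<not> 0 < c"
  then have "f x \<le> 0" for x
    using assms(2)[of x] by linarith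
  then have "(\<lambda>x. ennreal (f x)) = (\<lambda>_. 0)"
    by (simp add: fun_eq_iff ennreal_eq_0_iff)
  then show False
    using prob_space.emeasure_space_1[OF assms(1)] by (simp add: emeasure_density)
qed

lemma le_two_sqrt_of_forall_pos:
  fixes c D Q :: real
  assumes "0 < c" "0 \<le> D" and bound: "\<And>t. 0 < t \<Longrightarrow> Q \<le> 2 * c * t + D / t"
  shows "Q \<le> 2 * sqrt (2 * c * D)"
proof (cases "D = 0")
  case True
  have "Q \<le> 0 + e" if "0 < e" for e
    using bound[of "e / (2 * c)"] True that \<open>0 < c\<close> by simp
  then show ?thesis using True by (simp add: field_le_epsilon)
next
  case False
  define s where "s = sqrt (2 * c * D)"
  have "0 < s" "s * s = 2 * c * D"
    using False assms(1,2) by (simp_all add: s_def)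
  have "Q \<le> 2 * c * (s / (2 * c)) + D / (s / (2 * c))"
    by (rule bound) (use \<open>0 < s\<close> \<open>0 < c\<close> in simp)
  also have "\<dots> = s + s * s / s"
    using \<open>0 < s\<close> \<open>0 < c\<close> \<open>s * s = 2 * c * D\<close> by (simp add: field_simps)
  also have "\<dots> = 2 * s"
    using \<open>0 < s\<close> by simp
  finally show ?thesis by (simp add: s_def)
qed

lemma abs_power2_diff_le:
  fixes s s' e :: real
  assumes "0 \<le> s" "0 \<le> s'" "\<bar>s - s'\<bar> \<le> e"
  shows "\<bar>s\<^sup>2 - s'\<^sup>2\<bar> \<le> 2 * min s s' * e + e\<^sup>2"
proof -
  have "s\<^sup>2 - s'\<^sup>2 = (s - s') * (2 * min s s' + \<bar>s - s'\<bar>)"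
    by (simp add: min_def abs_if power2_eq_square algebra_simps)
  then have "\<bar>s\<^sup>2 - s'\<^sup>2\<bar> = \<bar>s - s'\<bar> * (2 * min s s' + \<bar>s - s'\<bar>)"
    using assms(1,2) by (simp add: abs_mult)
  also have "\<dots> \<le> e * (2 * min s s' + e)"
    using assms by (intro mult_mono add_left_mono) auto
  finally show ?thesis by (simp add: power2_eq_square algebra_simps)
qed

lemma abs_mean_diff_le_Wass_1:
  assumes "Wass 1 \<eta> \<eta>' \<le> ennreal \<epsilon>" "0 \<le> \<epsilon>" "integrable \<eta> (\<lambda>x. x)" "integrable \<eta>' (\<lambda>x. x)"
  shows "\<bar>mean_of \<eta> - mean_of \<eta>'\<bar> \<le> \<epsilon>"
  by (rule le_of_Wass_1_le[where g = "\<lambda>r. r", OF assms(1,2)])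
    (auto simp: mono_def intro: coupling.abs_mean_diff_le assms(3,4))

lemma abs_MAD_diff_le_Wass_1:
  assumes "Wass 1 \<eta> \<eta>' \<le> ennreal \<epsilon>" "0 \<le> \<epsilon>" "integrable \<eta> (\<lambda>x. x)" "integrable \<eta>' (\<lambda>x. x)"
  shows "\<bar>MAD_of \<eta> - MAD_of \<eta>'\<bar> \<le> 2 * \<epsilon>"
  by (rule le_of_Wass_1_le[where g = "\<lambda>r. 2 * r", OF assms(1,2)])
    (auto simp: mono_def intro: coupling.abs_MAD_diff_le assms(3,4))

lemma abs_I_of_diff_le_Wass_1:
  fixes f :: "real \<Rightarrow> real"
  assumes W: "Wass 1 \<eta> \<eta>' \<le> ennreal \<epsilon>" "0 \<le> \<epsilon>" and "prob_space \<eta>"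
    and \<eta>: "\<eta> = density lborel (\<lambda>x. ennreal (f x))" and f: "f \<in> borel_measurable borel" "\<And>x. f x \<le> c"
  shows "\<bar>I_of \<eta> a b - I_of \<eta>' a b\<bar> \<le> 2 * sqrt (2 * c * \<epsilon>)"
proof -
  have "0 < c" using density_bound_pos \<open>prob_space \<eta>\<close> f(2) unfolding \<eta> .
  have dominated: "measure \<eta> A \<le> c * measure lborel A"
    if "A \<in> sets borel" "emeasure lborel A < \<infinity>" for A
    unfolding \<eta> using measure_density_le[OF f(1) that(1) f(2) _ that(2)] \<open>0 < c\<close> by simp
  show ?thesis
  proof (rule le_of_Wass_1_le[where g = "\<lambda>r. 2 * sqrt (2 * c * r)", OF W])
    show "mono (\<lambda>r. 2 * sqrt (2 * c * r))"
      using \<open>0 < c\<close> by (auto simp: mono_def)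
    show "isCont (\<lambda>r. 2 * sqrt (2 * c * r)) \<epsilon>"
      by (intro continuous_intros)
    fix \<gamma> assume "coupling \<gamma> \<eta> \<eta>'" and XY: "integrable \<gamma> (\<lambda>z. \<bar>fst z - snd z\<bar>)"
    show "\<bar>I_of \<eta> a b - I_of \<eta>' a b\<bar> \<le> 2 * sqrt (2 * c * (\<integral>z. \<bar>fst z - snd z\<bar> \<partial>\<gamma>))"
      using \<open>0 < c\<close> coupling.abs_I_of_diff_le[OF \<open>coupling \<gamma> \<eta> \<eta>'\<close> dominated XY]
      by (intro le_two_sqrt_of_forall_pos) auto
  qed
qed

lemma abs_sd_diff_le_Wass_2:
  assumes "Wass 2 \<eta> \<eta>' \<le> ennreal \<epsilon>" "0 \<le> \<epsilon>" "integrable \<eta> (\<lambda>x. x\<^sup>2)" "integrable \<eta>' (\<lambda>x. x\<^sup>2)"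
  shows "\<bar>sd_of \<eta> - sd_of \<eta>'\<bar> \<le> \<epsilon>"
  by (rule le_of_Wass_2_le[where g = "\<lambda>r. r", OF assms(1,2)])
    (auto simp: mono_def intro: coupling.abs_sd_diff_le assms(3,4))

lemma abs_var_diff_le_Wass_2:
  assumes "Wass 2 \<eta> \<eta>' \<le> ennreal \<epsilon>" "0 \<le> \<epsilon>" "integrable \<eta> (\<lambda>x. x\<^sup>2)" "integrable \<eta>' (\<lambda>x. x\<^sup>2)"
  shows "\<bar>var_of \<eta> - var_of \<eta>'\<bar> \<le> 2 * min (sd_of \<eta>) (sd_of \<eta>') * \<epsilon> + \<epsilon>\<^sup>2"
proof -
  have "0 \<le> var_of \<eta>" "0 \<le> var_of \<eta>'"
    by (simp_all add: var_of_def)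
  then have var: "var_of \<eta> = (sd_of \<eta>)\<^sup>2" "var_of \<eta>' = (sd_of \<eta>')\<^sup>2"
    and sd: "0 \<le> sd_of \<eta>" "0 \<le> sd_of \<eta>'"
    by (simp_all add: sd_of_def)
  show ?thesis
    unfolding var by (rule abs_power2_diff_le[OF sd abs_sd_diff_le_Wass_2[OF assms]])
qed

text \<open>The coupling argument gives \<open>\<bar>\<sigma> - \<sigma>'\<bar> \<le> \<epsilon>\<close> and
  \<open>\<bar>\<sigma>\<^sup>2 - \<sigma>'\<^sup>2\<bar> \<le> 2 min \<sigma> \<sigma>' \<epsilon> + \<epsilon>\<^sup>2\<close> directly; the constants
  \<open>(\<surd>2 + \<surd>6)/2\<close>, \<open>2 powr (3/2)\<close> and \<open>1 + 3\<surd>2\<close> of the theorem are weaker.\<close>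

lemma weaken_sd_var_bounds:
  fixes d v m \<epsilon> :: real
  assumes "0 \<le> m" "0 \<le> \<epsilon>" "d \<le> \<epsilon>" "v \<le> 2 * m * \<epsilon> + \<epsilon>\<^sup>2"
  shows "d \<le> (sqrt 2 + sqrt 6) / 2 * \<epsilon>" "(sqrt 2 + sqrt 6) / 2 * \<epsilon> \<le> 2 * \<epsilon>"
    "v \<le> 2 powr (3/2) * m * \<epsilon> + (1 + 3 * sqrt 2) * \<epsilon>\<^sup>2"
    "2 powr (3/2) * m * \<epsilon> + (1 + 3 * sqrt 2) * \<epsilon>\<^sup>2 \<le> 3 * m * \<epsilon> + 5.25 * \<epsilon>\<^sup>2"
proof -
  have "sqrt 2 \<le> (17/12 :: real)" "sqrt 6 \<le> (5/2 :: real)"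
    by (rule real_le_lsqrt; simp add: power2_eq_square)+
  then have sqrt2: "1 \<le> sqrt (2 :: real)" "sqrt 2 \<le> (17/12 :: real)"
    and sqrt6: "1 \<le> sqrt (6 :: real)" "sqrt 6 \<le> (5/2 :: real)"
    by simp_all
  have "(2 :: real) powr (3/2) = 2 powr (1 + 1/2)" by simp
  also have "\<dots> = 2 * sqrt 2" by (simp only: powr_add powr_half_sqrt) simp
  finally have k2: "2 \<le> (2 :: real) powr (3/2)" "(2 :: real) powr (3/2) \<le> 3"
    using sqrt2 by simp_all
  have k1_ge: "1 \<le> (sqrt 2 + sqrt 6) / (2 :: real)"
    using add_mono[OF sqrt2(1) sqrt6(1)] by simp
  have k1_le: "(sqrt 2 + sqrt 6) / 2 \<le> (2 :: real)"
    using add_mono[OF sqrt2(2) sqrt6(2)] by simp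
  have k3: "1 \<le> 1 + 3 * sqrt (2 :: real)" "1 + 3 * sqrt (2 :: real) \<le> 5.25"
    using sqrt2 by simp_all
  have "0 \<le> m * \<epsilon>" "0 \<le> \<epsilon>\<^sup>2" using assms(1,2) by simp_all
  note scale = mult_right_mono[OF _ assms(2)] mult_right_mono[OF _ \<open>0 \<le> m * \<epsilon>\<close>]
    mult_right_mono[OF _ \<open>0 \<le> \<epsilon>\<^sup>2\<close>]
  show "d \<le> (sqrt 2 + sqrt 6) / 2 * \<epsilon>" "(sqrt 2 + sqrt 6) / 2 * \<epsilon> \<le> 2 * \<epsilon>"
    using assms(3) scale(1)[OF k1_ge] scale(1)[OF k1_le] by simp_all
  show "v \<le> 2 powr (3/2) * m * \<epsilon> + (1 + 3 * sqrt 2) * \<epsilon>\<^sup>2"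
    using assms(4) scale(2)[OF k2(1)] scale(3)[OF k3(1)] unfolding mult.assoc by linarith
  show "2 powr (3/2) * m * \<epsilon> + (1 + 3 * sqrt 2) * \<epsilon>\<^sup>2 \<le> 3 * m * \<epsilon> + 5.25 * \<epsilon>\<^sup>2"
    using scale(2)[OF k2(2)] scale(3)[OF k3(2)] unfolding mult.assoc by linarith
qed

theorem theorem4:
  fixes \<eta> \<eta>' :: "real measure" and \<epsilon> :: real
  assumes "prob_space \<eta>" and "sets \<eta> = sets borel"
    and "prob_space \<eta>'" and "sets \<eta>' = sets borel"
    and "0 \<le> \<epsilon>"
  shows
   "(Wass 1 \<eta> \<eta>' \<le> ennreal \<epsilon> \<longrightarrow>
       ((integrable \<eta> (\<lambda>x. x) \<and> integrable \<eta>' (\<lambda>x. x)) \<longrightarrow>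
          \<bar>mean_of \<eta> - mean_of \<eta>'\<bar> \<le> \<epsilon> \<and> \<bar>MAD_of \<eta> - MAD_of \<eta>'\<bar> \<le> 2 * \<epsilon>)
     \<and> (\<forall>c f. (f \<in> borel_measurable borel \<and> (\<forall>x. 0 \<le> f x \<and> f x \<le> c)
               \<and> \<eta> = density lborel (\<lambda>x. ennreal (f x))) \<longrightarrow>
           (\<forall>a b :: ereal. a < b \<longrightarrow>
               \<bar>I_of \<eta> a b - I_of \<eta>' a b\<bar> \<le> 2 * sqrt (2 * c * \<epsilon>))))
  \<and> (Wass 2 \<eta> \<eta>' \<le> ennreal \<epsilon> \<longrightarrow>
       Wass 1 \<eta> \<eta>' \<le> ennreal \<epsilon>
     \<and> ((integrable \<eta> (\<lambda>x. x\<^sup>2) \<and> integrable \<eta>' (\<lambda>x. x\<^sup>2)) \<longrightarrow>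
          \<bar>sd_of \<eta> - sd_of \<eta>'\<bar> \<le> (sqrt 2 + sqrt 6) / 2 * \<epsilon>
        \<and> (sqrt 2 + sqrt 6) / 2 * \<epsilon> \<le> 2 * \<epsilon>
        \<and> \<bar>var_of \<eta> - var_of \<eta>'\<bar>
             \<le> 2 powr (3/2) * min (sd_of \<eta>) (sd_of \<eta>') * \<epsilon> + (1 + 3 * sqrt 2) * \<epsilon>\<^sup>2
        \<and> 2 powr (3/2) * min (sd_of \<eta>) (sd_of \<eta>') * \<epsilon> + (1 + 3 * sqrt 2) * \<epsilon>\<^sup>2
             \<le> 3 * min (sd_of \<eta>) (sd_of \<eta>') * \<epsilon> + 5.25 * \<epsilon>\<^sup>2))"
proof -
  have "0 \<le> min (sd_of \<eta>) (sd_of \<eta>')"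
    by (simp add: sd_of_def var_of_def)
  note constants = weaken_sd_var_bounds[OF this assms(5)
      abs_sd_diff_le_Wass_2[OF _ assms(5)] abs_var_diff_le_Wass_2[OF _ assms(5)]]
  show ?thesis
    using abs_mean_diff_le_Wass_1[OF _ assms(5)] abs_MAD_diff_le_Wass_1[OF _ assms(5)]
      abs_I_of_diff_le_Wass_1[OF _ assms(5,1)] order_trans[OF Wass_1_le_Wass_2] constants
    by auto
qed

end
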